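(* There is an absolute constant $\beta>0$ such that for every integer $k>5$ there exists a $k$-terminal network $(G,c)$ with $G$ planar such that every mimicking network $(G',c')$ of $(G,c)$ satisfies $|E(G')|\ge \beta k^2$.
   Context: A network $(G,c)$ is an undirected graph $G$ with edge costs $c:E(G)\to\mathbb{R}^+$. A $k$-terminal network additionally has a set $Q=\{q_1,\dots,q_k\}\subseteq V(G)$ of distinguished vertices called terminals. For $S\subset Q$ with $S\neq\emptyset,Q$, write $\bar S=Q\setminus S$; a cut $(W,V(G)\setminus W)$ is $S$-separating if $W\cap Q\in\{S,\bar S\}$. The cost of a cut is the total cost of the edges with exactly one endpoint in $W$ (the cutset). $\mathrm{mincut}_{G,c}(S,\bar S)$ denotes the minimum cost of an $S$-separating cut. A mimicking network of a $k$-terminal network $(G,c)$ is a $k$-terminal network $(G',c')$ with the same terminal set $Q$ such that $\mathrm{mincut}_{G',c'}(S,\bar S)=\mathrm{mincut}_{G,c}(S,\bar S)$ for every $S\subset Q$ with $S\neq\emptyset,Q$. *)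

theory Defs
  imports "HOL-Analysis.Analysis"
begin

text \<open>A (finite, simple, undirected) graph on vertex set V with edge set E:
  every edge is a two-element subset of V. Vertices are natural numbers
  (every finite graph is isomorphic to one of this form).\<close>
definition graph :: "nat set \<Rightarrow> nat set set \<Rightarrow> bool" where
  "graph V E \<longleftrightarrow> finite V \<and> (\<forall>e\<in>E. e \<subseteq> V \<and> card e = 2)"

definition network :: "nat set \<Rightarrow> nat set set \<Rightarrow> (nat set \<Rightarrow> real) \<Rightarrow> bool" where
  "network V E c \<longleftrightarrow> graph V E \<and> (\<forall>e\<in>E. c e > 0)"

definition cut_cost :: "nat set set \<Rightarrow> (nat set \<Rightarrow> real) \<Rightarrow> nat set \<Rightarrow> real" where
  "cut_cost E c W = (\<Sum>e\<in>{e\<in>E. card (e \<inter> W) = 1}. c e)"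

definition separating :: "nat set \<Rightarrow> nat set \<Rightarrow> nat set \<Rightarrow> nat set \<Rightarrow> bool" where
  "separating V Q S W \<longleftrightarrow> W \<subseteq> V \<and> (W \<inter> Q = S \<or> W \<inter> Q = Q - S)"

definition mincut :: "nat set \<Rightarrow> nat set set \<Rightarrow> (nat set \<Rightarrow> real) \<Rightarrow> nat set \<Rightarrow> nat set \<Rightarrow> real" where
  "mincut V E c Q S = Min {cut_cost E c W | W. separating V Q S W}"

definition mimicking :: "nat set \<Rightarrow> nat set set \<Rightarrow> (nat set \<Rightarrow> real) \<Rightarrow> nat set \<Rightarrow>
    nat set \<Rightarrow> nat set set \<Rightarrow> (nat set \<Rightarrow> real) \<Rightarrow> bool" where
  "mimicking V E c Q V' E' c' \<longleftrightarrow> network V' E' c' \<and> Q \<subseteq> V' \<and>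
     (\<forall>S. S \<subseteq> Q \<and> S \<noteq> {} \<and> S \<noteq> Q \<longrightarrow> mincut V' E' c' Q S = mincut V E c Q S)"

definition planar :: "nat set \<Rightarrow> nat set set \<Rightarrow> bool" where
  "planar V E \<longleftrightarrow> (\<exists>(f :: nat \<Rightarrow> real^2) (\<gamma> :: nat set \<Rightarrow> real \<Rightarrow> real^2).
     inj_on f V \<and>
     (\<forall>e\<in>E. arc (\<gamma> e) \<and> {pathstart (\<gamma> e), pathfinish (\<gamma> e)} = f ` e \<and>
             path_image (\<gamma> e) \<inter> f ` V = f ` e) \<and>
     (\<forall>e\<in>E. \<forall>e'\<in>E. e \<noteq> e' \<longrightarrow> path_image (\<gamma> e) \<inter> path_image (\<gamma> e') \<subseteq> f ` (e \<inter> e')))"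

end

theory Submission
  imports Defs "HOL-Library.Nat_Bijection"
begin

(* Take the N x N grid with N terminals on each of its four sides (plus up
   to three isolated terminals, to reach any k = 4N + rho).  Grid edges get costs that are
   a "base cost" decreasing along the rows/columns plus a perturbation in (0,1), chosen
   so that all costs are linearly independent over the rationals.

   For 1 <= i, j <= N let S(i,j) consist of the first i terminals on the left
   side and the first j terminals on the top side.  The minimum S(i,j)-separating cut is
   the L-shaped "corner cut" around the top-left i x j block (corner_cut_minimal,
   grid_mincut).  These N^2 minimum-cut values are Q-linearly independent, since each one
   uses an edge that no earlier one (in column order) uses (corner_sums_independent).  In
   a mimicking network every minimum-cut value is a sum of edge costs, so the N^2
   independent values lie in the Q-span of its |E'| edge costs, forcing |E'| >= N^2
   (mimicking_edge_lower_bound).  The grid is planar (grid_planar), and k <= 8N gives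
   |E'| >= k^2/64. *)

definition rat_scale :: "rat \<Rightarrow> real \<Rightarrow> real" where
  "rat_scale q x = of_rat q * x"

interpretation ratvec: vector_space rat_scale
  by unfold_locales (auto simp: rat_scale_def algebra_simps of_rat_add of_rat_mult)

lemma ratvec_span_countable:
  assumes "finite B"
  shows "countable (ratvec.span B)"
proof -
  have "ratvec.span B \<subseteq> (\<lambda>u. \<Sum>v\<in>B. rat_scale (u v) v) ` (Pi\<^sub>E B (\<lambda>_. UNIV))"
  proof
    fix x assume "x \<in> ratvec.span B"
    then obtain u where u: "x = (\<Sum>v\<in>B. rat_scale (u v) v)"
      using ratvec.span_finite[OF assms] by auto
    have "x = (\<Sum>v\<in>B. rat_scale (restrict u B v) v)"
      unfolding u by (rule sum.cong) auto
    moreover have "restrict u B \<in> Pi\<^sub>E B (\<lambda>_. UNIV)" by auto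
    ultimately show "x \<in> (\<lambda>u. \<Sum>v\<in>B. rat_scale (u v) v) ` (Pi\<^sub>E B (\<lambda>_. UNIV))"
      by blast
  qed
  moreover have "countable (Pi\<^sub>E B (\<lambda>_. UNIV :: rat set))"
    by (rule countable_PiE) (auto simp: assms)
  ultimately show ?thesis by (meson countable_image countable_subset)
qed

(* Every finite family of open intervals of equal length d > 0 contains a Q-linearly
   independent choice of distinct representatives, since a countable span never covers an interval. *)
lemma independent_perturbation_exists:
  fixes lo :: "'a \<Rightarrow> real"
  assumes "finite A" "d > 0"
  shows "\<exists>x. (\<forall>a\<in>A. lo a < x a \<and> x a < lo a + d) \<and> inj_on x A \<and> ratvec.independent (x ` A)"
  using assms(1)
proof (induction A rule: finite_induct)
  case empty
  then show ?case by (auto simp: ratvec.independent_empty)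
next
  case (insert a A)
  then obtain x where x: "\<forall>a\<in>A. lo a < x a \<and> x a < lo a + d" "inj_on x A"
    "ratvec.independent (x ` A)"
    by blast
  have "countable (ratvec.span (x ` A))"
    using insert(1) by (intro ratvec_span_countable) auto
  moreover have "uncountable {lo a<..<lo a + d}"
    using assms(2) by (simp add: uncountable_open_interval)
  ultimately obtain y where y: "y \<in> {lo a<..<lo a + d}" "y \<notin> ratvec.span (x ` A)"
    by (metis countable_subset subsetI)
  define x' where "x' = x(a := y)"
  have same: "x' ` A = x ` A"
    using insert(2) unfolding x'_def by (auto intro!: image_cong)
  have new: "y \<notin> x ` A" using y(2) ratvec.span_base by blast
  have "x' ` insert a A = insert y (x ` A)"
    unfolding image_insert same by (simp add: x'_def)
  then have "ratvec.independent (x' ` insert a A)"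
    using x(3) y(2) by (simp add: ratvec.independent_insertI)
  moreover have "inj_on x' (insert a A)"
    using x(2) new insert(2) same by (auto simp: x'_def inj_on_def)
  moreover have "\<forall>b\<in>insert a A. lo b < x' b \<and> x' b < lo b + d"
    using x(1) y(1) insert(2) by (auto simp: x'_def)
  ultimately show ?case by blast
qed

lemma independent_triangular:
  fixes m :: "'a \<Rightarrow> real" and rk :: "'a \<Rightarrow> 'b::linorder"
  assumes "finite A"
    and triangular: "\<And>t. t \<in> A \<Longrightarrow> m t \<notin> ratvec.span (m ` {s \<in> A - {t}. rk s \<le> rk t})"
  shows "ratvec.independent (m ` A) \<and> inj_on m A"
proof -
  have "S \<subseteq> A \<longrightarrow> ratvec.independent (m ` S) \<and> inj_on m S" if "finite S" for S
    using that
  proof (induction S rule: finite_ranking_induct[where f = rk])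
    case empty
    then show ?case by (simp add: ratvec.independent_empty)
  next
    case (insert t S)
    show ?case
    proof
      assume sub: "insert t S \<subseteq> A"
      show "ratvec.independent (m ` insert t S) \<and> inj_on m (insert t S)"
      proof (cases "t \<in> S")
        case True
        then show ?thesis using insert(3) sub by (simp add: insert_absorb)
      next
        case False
        then have "S \<subseteq> {s \<in> A - {t}. rk s \<le> rk t}" using sub insert(2) by blast
        then have "ratvec.span (m ` S) \<subseteq> ratvec.span (m ` {s \<in> A - {t}. rk s \<le> rk t})"
          by (intro ratvec.span_mono image_mono)
        then have out: "m t \<notin> ratvec.span (m ` S)" using triangular[of t] sub by blast
        then have "m t \<notin> m ` S" using ratvec.span_base by blast
        then show ?thesis
          using insert(3) sub out False by (simp add: ratvec.independent_insertI)
      qed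
    qed
  qed
  then show ?thesis using assms(1) by blast
qed

lemma sum_notin_span_of_avoiding:
  fixes w :: "'l \<Rightarrow> real"
  assumes "finite L" "inj_on w L" "ratvec.independent (w ` L)"
    and "k \<in> F" "F \<subseteq> L" "\<And>s. s \<in> B \<Longrightarrow> G s \<subseteq> L - {k}"
  shows "(\<Sum>l\<in>F. w l) \<notin> ratvec.span ((\<lambda>s. \<Sum>l\<in>G s. w l) ` B)"
proof
  let ?T = "ratvec.span (w ` (L - {k}))"
  have base: "w l \<in> ?T" if "l \<in> L - {k}" for l
    using that by (intro ratvec.span_base imageI)
  assume in_span: "(\<Sum>l\<in>F. w l) \<in> ratvec.span ((\<lambda>s. \<Sum>l\<in>G s. w l) ` B)"
  have "(\<Sum>l\<in>G s. w l) \<in> ?T" if "s \<in> B" for s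
    using assms(6)[OF that] base by (intro ratvec.span_sum) blast
  then have "ratvec.span ((\<lambda>s. \<Sum>l\<in>G s. w l) ` B) \<subseteq> ?T"
    by (intro ratvec.span_minimal) auto
  with in_span have total: "(\<Sum>l\<in>F. w l) \<in> ?T" by blast
  have rest: "(\<Sum>l\<in>F - {k}. w l) \<in> ?T"
    using assms(5) base by (intro ratvec.span_sum) blast
  have "finite F" using assms(1,5) finite_subset by blast
  then have "w k = (\<Sum>l\<in>F. w l) - (\<Sum>l\<in>F - {k}. w l)"
    using assms(4) by (simp add: sum.remove)
  then have "w k \<in> ?T" using ratvec.span_diff[OF total rest] by simp
  moreover have "w ` (L - {k}) = w ` L - {w k}"
    using assms(2,4,5) by (auto simp: inj_on_def)
  ultimately have "w k \<in> ratvec.span (w ` L - {w k})" by simp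
  then have "ratvec.dependent (w ` L)"
    unfolding ratvec.dependent_def using assms(4,5) by blast
  with assms(3) show False by simp
qed

(* Every minimum-cut value is a sum of edge costs, hence lies in their Q-span. *)
lemma mincut_in_span:
  assumes "finite V" "S \<subseteq> Q" "Q \<subseteq> V"
  shows "mincut V E c Q S \<in> ratvec.span (c ` E)"
proof -
  let ?costs = "{cut_cost E c W | W. separating V Q S W}"
  have "?costs \<subseteq> (\<lambda>W. cut_cost E c W) ` Pow V" unfolding separating_def by auto
  then have "finite ?costs" using assms(1) by (meson finite_imageI finite_subset finite_Pow_iff)
  moreover have "separating V Q S S" using assms(2,3) unfolding separating_def by auto
  ultimately have "Min ?costs \<in> ?costs" by (intro Min_in) auto
  then obtain W where "mincut V E c Q S = cut_cost E c W" unfolding mincut_def by blast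
  moreover have "cut_cost E c W \<in> ratvec.span (c ` E)"
    unfolding cut_cost_def by (intro ratvec.span_sum ratvec.span_base) blast
  ultimately show ?thesis by simp
qed

lemma mimicking_edge_lower_bound:
  assumes mim: "mimicking V E c Q V' E' c'" and "finite A"
    and indep: "ratvec.independent (m ` A)" "inj_on m A"
    and realized: "\<And>a. a \<in> A \<Longrightarrow> \<exists>S. S \<subseteq> Q \<and> S \<noteq> {} \<and> S \<noteq> Q \<and> m a = mincut V E c Q S"
  shows "card A \<le> card E'"
proof -
  have net: "network V' E' c'" and QV: "Q \<subseteq> V'" using mim unfolding mimicking_def by auto
  then have finV: "finite V'" and edges: "\<forall>e\<in>E'. e \<subseteq> V'"
    unfolding network_def graph_def by auto
  then have finE: "finite E'" by (meson Pow_iff finite_Pow_iff finite_subset subsetI)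
  have "m ` A \<subseteq> ratvec.span (c' ` E')"
  proof
    fix x assume "x \<in> m ` A"
    then obtain S where S: "S \<subseteq> Q" "S \<noteq> {}" "S \<noteq> Q" "x = mincut V E c Q S" using realized by blast
    then have "x = mincut V' E' c' Q S" using mim unfolding mimicking_def by simp
    then show "x \<in> ratvec.span (c' ` E')" using mincut_in_span[OF finV S(1) QV] by simp
  qed
  then have "card (m ` A) \<le> card (c' ` E')"
    using ratvec.independent_span_bound indep(1) finE by blast
  also have "\<dots> \<le> card E'" using finE by (rule card_image_le)
  finally show ?thesis using indep(2) by (simp add: card_image)
qed

lemma planar_straight_line:
  fixes f :: "nat \<Rightarrow> real^2"
  assumes inj: "inj_on f V" and edges: "\<And>e. e \<in> E \<Longrightarrow> e \<subseteq> V \<and> card e = 2"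
    and vertices: "\<And>e. e \<in> E \<Longrightarrow> convex hull (f ` e) \<inter> f ` V = f ` e"
    and crossings: "\<And>e e'. e \<in> E \<Longrightarrow> e' \<in> E \<Longrightarrow> e \<noteq> e' \<Longrightarrow>
                      convex hull (f ` e) \<inter> convex hull (f ` e') \<subseteq> f ` (e \<inter> e')"
  shows "planar V E"
  unfolding planar_def
proof (intro exI conjI ballI impI)
  define \<gamma> where "\<gamma> e = linepath (f (Min e)) (f (Max e))" for e
  have segment: "arc (\<gamma> e) \<and> {pathstart (\<gamma> e), pathfinish (\<gamma> e)} = f ` e
      \<and> path_image (\<gamma> e) = convex hull (f ` e)" if e: "e \<in> E" for e
  proof -
    obtain x y where xy: "e = {x, y}" "x < y"
      using edges[OF e] by (auto simp: card_2_iff) (metis insert_commute linorder_neqE_nat)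
    then have "f x \<noteq> f y" using inj edges[OF e] by (auto dest: inj_onD)
    then show ?thesis
      using xy by (simp add: \<gamma>_def arc_linepath segment_convex_hull)
  qed
  show "inj_on f V" by (fact inj)
  fix e assume e: "e \<in> E"
  show "arc (\<gamma> e)" "{pathstart (\<gamma> e), pathfinish (\<gamma> e)} = f ` e"
    "path_image (\<gamma> e) \<inter> f ` V = f ` e"
    using segment[OF e] vertices[OF e] by auto
  fix e' assume "e' \<in> E" "e \<noteq> e'"
  then show "path_image (\<gamma> e) \<inter> path_image (\<gamma> e') \<subseteq> f ` (e \<inter> e')"
    using segment crossings e by auto
qed

(* Grid edges are labelled (d, r, c): for d = True the vertical edge from (r, c) to (r + 1, c),
   for d = False the horizontal edge from (r, c) to (r, c + 1). *)
fun tail :: "bool \<times> nat \<times> nat \<Rightarrow> nat \<times> nat" where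
  "tail (d, r, c) = (r, c)"

fun head :: "bool \<times> nat \<times> nat \<Rightarrow> nat \<times> nat" where
  "head (True, r, c) = (Suc r, c)"
| "head (False, r, c) = (r, Suc c)"

fun offset :: "bool \<times> nat \<times> nat \<Rightarrow> nat" where
  "offset (True, r, c) = r"
| "offset (False, r, c) = c"

definition grid_labels :: "nat \<Rightarrow> (bool \<times> nat \<times> nat) set" where
  "grid_labels N = {(True, r, c) | r c. r \<le> N \<and> c \<in> {1..N}} \<union> {(False, r, c) | r c. r \<in> {1..N} \<and> c \<le> N}"

definition base_cost :: "nat \<Rightarrow> bool \<times> nat \<times> nat \<Rightarrow> real" where
  "base_cost N l = 2 * real N ^ 2 + real N - real (offset l)"

(* The corner cut around the block {1..i} x {1..j}: the vertical edges leaving row i in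
   columns 1..j and the horizontal edges leaving column j in rows 1..i. *)
definition corner_cut :: "nat \<Rightarrow> nat \<Rightarrow> (bool \<times> nat \<times> nat) set" where
  "corner_cut i j = {(True, i, c) | c. c \<in> {1..j}} \<union> {(False, r, j) | r. r \<in> {1..i}}"

lemma finite_grid_labels: "finite (grid_labels N)"
proof -
  have "grid_labels N \<subseteq> UNIV \<times> {..N} \<times> {..N}" unfolding grid_labels_def by auto
  then show ?thesis by (rule finite_subset) auto
qed

lemma base_cost_ge:
  assumes "l \<in> grid_labels N"
  shows "2 * real N ^ 2 \<le> base_cost N l"
  using assms unfolding grid_labels_def base_cost_def by auto

lemma corner_cut_subset: "i \<le> N \<Longrightarrow> j \<le> N \<Longrightarrow> corner_cut i j \<subseteq> grid_labels N"
  unfolding corner_cut_def grid_labels_def by auto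

lemma sum_corner_cut:
  "(\<Sum>l\<in>corner_cut i j. w l) = (\<Sum>c\<in>{1..j}. w (True, i, c)) + (\<Sum>r\<in>{1..i}. w (False, r, j))"
proof -
  have "corner_cut i j = (\<lambda>c. (True, i, c)) ` {1..j} \<union> (\<lambda>r. (False, r, j)) ` {1..i}"
    unfolding corner_cut_def by auto
  then have "(\<Sum>l\<in>corner_cut i j. w l)
      = (\<Sum>l\<in>(\<lambda>c. (True, i, c)) ` {1..j}. w l) + (\<Sum>l\<in>(\<lambda>r. (False, r, j)) ` {1..i}. w l)"
    by (simp only:) (rule sum.union_disjoint, auto)
  also have "\<dots> = (\<Sum>c\<in>{1..j}. w (True, i, c)) + (\<Sum>r\<in>{1..i}. w (False, r, j))"
    by (simp add: sum.reindex inj_on_def)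
  finally show ?thesis .
qed

lemma change_point_exists:
  assumes "a \<le> b" "f a \<noteq> f b"
  shows "\<exists>x. a \<le> x \<and> x < b \<and> f x \<noteq> f (Suc x)"
  using assms
proof (induction b)
  case 0
  then show ?case by simp
next
  case (Suc b)
  show ?case
  proof (cases "a \<le> b \<and> f a \<noteq> f b")
    case True
    then show ?thesis using Suc.IH less_SucI by blast
  next
    case False
    then have "a = Suc b \<or> (a \<le> b \<and> f a = f b)" using Suc.prems by auto
    then show ?thesis using Suc.prems by (intro exI[of _ b]) auto
  qed
qed

(* One-dimensional core of the minimality argument. *)
lemma crossing_edge_cost:
  fixes f :: "nat \<Rightarrow> bool" and w :: "nat \<Rightarrow> real"
  assumes "f 0" "\<not> f (Suc N)" "1 \<le> i" "i \<le> N"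
    and w: "\<And>x. x \<le> N \<Longrightarrow> K - real x < w x \<and> w x < K - real x + 1"
  shows "\<exists>x \<le> N. f x \<noteq> f (Suc x) \<and> w i \<le> w x + (if f (Suc i) then real N else 0)"
proof (cases "f (Suc i)")
  case True
  then have "i \<noteq> N" using assms(2) by auto
  then obtain x where x: "Suc i \<le> x" "x < Suc N" "f x \<noteq> f (Suc x)"
    using change_point_exists[of "Suc i" "Suc N" f] True assms(2,4) by auto
  have "w i < K - real i + 1" using w[OF assms(4)] by simp
  moreover have "K - real x < w x" using w[of x] x(2) by simp
  moreover have "real x \<le> real N" "1 \<le> real i" using x(2) assms(3) by simp_all
  ultimately have "w i \<le> w x + real N" by linarith
  then show ?thesis using x True by (intro exI[of _ x]) auto
next
  case False
  then obtain x where x: "x < Suc i" "f x \<noteq> f (Suc x)"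
    using change_point_exists[of 0 "Suc i" f] assms(1) by auto
  have "w i \<le> w x"
  proof (cases "x = i")
    case False
    then have "real x + 1 \<le> real i" using x(1) by simp
    moreover have "w i < K - real i + 1" using w[OF assms(4)] by simp
    moreover have "K - real x < w x" using w[of x] x(1) assms(4) by simp
    ultimately show ?thesis by linarith
  qed simp
  then show ?thesis using x False assms(4) by (intro exI[of _ x]) auto
qed

(* If the colouring leaks past row i or column j, some cut edge lies in row i + 1 or column
   j + 1, i.e. outside the columns and rows used for the corner cut. *)
lemma compensating_cut_edge:
  fixes P :: "nat \<times> nat \<Rightarrow> bool"
  assumes ij: "1 \<le> i" "i \<le> N" "1 \<le> j" "j \<le> N"
    and left: "\<And>r. r \<in> {1..N} \<Longrightarrow> P (r, 0) = (r \<le> i)"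
    and top: "\<And>c. c \<in> {1..N} \<Longrightarrow> P (0, c) = (c \<le> j)"
    and bottom: "\<And>c. c \<in> {1..N} \<Longrightarrow> \<not> P (Suc N, c)"
    and right: "\<And>r. r \<in> {1..N} \<Longrightarrow> \<not> P (r, Suc N)"
    and leak: "(\<exists>c\<in>{1..j}. P (Suc i, c)) \<or> (\<exists>r\<in>{1..i}. P (r, Suc j))"
  shows "\<exists>s l. l \<in> {(False, Suc i, s), (True, s, Suc j)} \<and> l \<in> grid_labels N \<and> P (tail l) \<noteq> P (head l)"
  using leak
proof
  assume "\<exists>c\<in>{1..j}. P (Suc i, c)"
  then obtain c where c: "c \<in> {1..j}" "P (Suc i, c)" by blast
  then have "Suc i \<le> N" using bottom[of c] ij by (cases "i = N") auto
  then have "\<not> P (Suc i, 0)" using left[of "Suc i"] by simp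
  then obtain s where s: "s < c" "P (Suc i, s) \<noteq> P (Suc i, Suc s)"
    using change_point_exists[of 0 c "\<lambda>s. P (Suc i, s)"] c(2) by auto
  have "(False, Suc i, s) \<in> grid_labels N"
    unfolding grid_labels_def using s(1) c(1) ij \<open>Suc i \<le> N\<close> by auto
  then show ?thesis using s(2) by (intro exI[of _ s] exI[of _ "(False, Suc i, s)"]) simp
next
  assume "\<exists>r\<in>{1..i}. P (r, Suc j)"
  then obtain r where r: "r \<in> {1..i}" "P (r, Suc j)" by blast
  then have "Suc j \<le> N" using right[of r] ij by (cases "j = N") auto
  then have "\<not> P (0, Suc j)" using top[of "Suc j"] by simp
  then obtain s where s: "s < r" "P (s, Suc j) \<noteq> P (Suc s, Suc j)"
    using change_point_exists[of 0 r "\<lambda>s. P (s, Suc j)"] r(2) by auto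
  have "(True, s, Suc j) \<in> grid_labels N"
    unfolding grid_labels_def using s(1) r(1) ij \<open>Suc j \<le> N\<close> by auto
  then show ?thesis using s(2) by (intro exI[of _ s] exI[of _ "(True, s, Suc j)"]) simp
qed

lemma vertical_crossings:
  fixes P :: "nat \<times> nat \<Rightarrow> bool" and w :: "bool \<times> nat \<times> nat \<Rightarrow> real"
  assumes ij: "1 \<le> i" "i \<le> N" "j \<le> N"
    and w: "\<And>l. l \<in> grid_labels N \<Longrightarrow> base_cost N l < w l \<and> w l < base_cost N l + 1"
    and top: "\<And>c. c \<in> {1..N} \<Longrightarrow> P (0, c) = (c \<le> j)"
    and bottom: "\<And>c. c \<in> {1..N} \<Longrightarrow> \<not> P (Suc N, c)"
  obtains \<rho> where "\<And>c. c \<in> {1..j} \<Longrightarrow> \<rho> c \<le> N \<and> P (\<rho> c, c) \<noteq> P (Suc (\<rho> c), c) \<and>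
    w (True, i, c) \<le> w (True, \<rho> c, c) + (if P (Suc i, c) then real N else 0)"
proof -
  have "\<forall>c\<in>{1..j}. \<exists>x \<le> N. P (x, c) \<noteq> P (Suc x, c) \<and>
      w (True, i, c) \<le> w (True, x, c) + (if P (Suc i, c) then real N else 0)"
  proof
    fix c assume c: "c \<in> {1..j}"
    have lab: "(True, x, c) \<in> grid_labels N" if "x \<le> N" for x
      using that c ij unfolding grid_labels_def by auto
    show "\<exists>x \<le> N. P (x, c) \<noteq> P (Suc x, c) \<and>
        w (True, i, c) \<le> w (True, x, c) + (if P (Suc i, c) then real N else 0)"
    proof (rule crossing_edge_cost[where f = "\<lambda>x. P (x, c)" and K = "2 * real N ^ 2 + real N"])
      show "2 * real N ^ 2 + real N - real x < w (True, x, c) \<and>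
          w (True, x, c) < 2 * real N ^ 2 + real N - real x + 1" if "x \<le> N" for x
        using w[OF lab[OF that]] by (simp add: base_cost_def)
    qed (use ij c top[of c] bottom[of c] in auto)
  qed
  then show ?thesis using that by metis
qed

lemma horizontal_crossings:
  fixes P :: "nat \<times> nat \<Rightarrow> bool" and w :: "bool \<times> nat \<times> nat \<Rightarrow> real"
  assumes ij: "i \<le> N" "1 \<le> j" "j \<le> N"
    and w: "\<And>l. l \<in> grid_labels N \<Longrightarrow> base_cost N l < w l \<and> w l < base_cost N l + 1"
    and left: "\<And>r. r \<in> {1..N} \<Longrightarrow> P (r, 0) = (r \<le> i)"
    and right: "\<And>r. r \<in> {1..N} \<Longrightarrow> \<not> P (r, Suc N)"
  obtains \<sigma> where "\<And>r. r \<in> {1..i} \<Longrightarrow> \<sigma> r \<le> N \<and> P (r, \<sigma> r) \<noteq> P (r, Suc (\<sigma> r)) \<and>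
    w (False, r, j) \<le> w (False, r, \<sigma> r) + (if P (r, Suc j) then real N else 0)"
proof -
  have "\<forall>r\<in>{1..i}. \<exists>x \<le> N. P (r, x) \<noteq> P (r, Suc x) \<and>
      w (False, r, j) \<le> w (False, r, x) + (if P (r, Suc j) then real N else 0)"
  proof
    fix r assume r: "r \<in> {1..i}"
    have lab: "(False, r, x) \<in> grid_labels N" if "x \<le> N" for x
      using that r ij unfolding grid_labels_def by auto
    show "\<exists>x \<le> N. P (r, x) \<noteq> P (r, Suc x) \<and>
        w (False, r, j) \<le> w (False, r, x) + (if P (r, Suc j) then real N else 0)"
    proof (rule crossing_edge_cost[where f = "\<lambda>x. P (r, x)" and K = "2 * real N ^ 2 + real N"])
      show "2 * real N ^ 2 + real N - real x < w (False, r, x) \<and>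
          w (False, r, x) < 2 * real N ^ 2 + real N - real x + 1" if "x \<le> N" for x
        using w[OF lab[OF that]] by (simp add: base_cost_def)
    qed (use ij r left[of r] right[of r] in auto)
  qed
  then show ?thesis using that by metis
qed

(* The total loss over all columns and rows is at most 2N^2, and it is paid for by a set of
   cut edges (empty if nothing leaks) lying in row i + 1 or column j + 1. *)
lemma leak_compensated:
  fixes P :: "nat \<times> nat \<Rightarrow> bool" and w :: "bool \<times> nat \<times> nat \<Rightarrow> real"
  assumes ij: "1 \<le> i" "i \<le> N" "1 \<le> j" "j \<le> N"
    and w: "\<And>l. l \<in> grid_labels N \<Longrightarrow> base_cost N l < w l \<and> w l < base_cost N l + 1"
    and left: "\<And>r. r \<in> {1..N} \<Longrightarrow> P (r, 0) = (r \<le> i)"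
    and top: "\<And>c. c \<in> {1..N} \<Longrightarrow> P (0, c) = (c \<le> j)"
    and bottom: "\<And>c. c \<in> {1..N} \<Longrightarrow> \<not> P (Suc N, c)"
    and right: "\<And>r. r \<in> {1..N} \<Longrightarrow> \<not> P (r, Suc N)"
  obtains X where "X \<subseteq> {l\<in>grid_labels N. P (tail l) \<noteq> P (head l)}"
    "\<And>l. l \<in> X \<Longrightarrow> \<exists>s. l \<in> {(False, Suc i, s), (True, s, Suc j)}"
    "(\<Sum>c\<in>{1..j}. if P (Suc i, c) then real N else 0) + (\<Sum>r\<in>{1..i}. if P (r, Suc j) then real N else 0)
       \<le> (\<Sum>l\<in>X. w l)"
proof (cases "(\<exists>c\<in>{1..j}. P (Suc i, c)) \<or> (\<exists>r\<in>{1..i}. P (r, Suc j))")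
  case True
  then obtain s l where l: "l \<in> {(False, Suc i, s), (True, s, Suc j)}" "l \<in> grid_labels N"
      "P (tail l) \<noteq> P (head l)"
    using compensating_cut_edge[OF ij left top bottom right] by blast
  have "(\<Sum>c\<in>{1..j}. if P (Suc i, c) then real N else 0) \<le> real j * real N"
    "(\<Sum>r\<in>{1..i}. if P (r, Suc j) then real N else 0) \<le> real i * real N"
    using sum_bounded_above[of "{1..j}" "\<lambda>c. if P (Suc i, c) then real N else 0" "real N"]
      sum_bounded_above[of "{1..i}" "\<lambda>r. if P (r, Suc j) then real N else 0" "real N"]
    by auto
  moreover have "real j * real N \<le> real N ^ 2" "real i * real N \<le> real N ^ 2"
    using ij by (simp_all add: power2_eq_square mult_right_mono)
  moreover have "2 * real N ^ 2 \<le> w l" using base_cost_ge[OF l(2)] w[OF l(2)] by linarith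
  ultimately show ?thesis using l by (intro that[of "{l}"]) auto
next
  case False
  then show ?thesis by (intro that[of "{}"]) auto
qed

(* The crossing edges of
   the j columns and i rows are distinct cut edges, and the compensating edges are further ones. *)
lemma corner_cut_minimal:
  fixes P :: "nat \<times> nat \<Rightarrow> bool" and w :: "bool \<times> nat \<times> nat \<Rightarrow> real"
  assumes ij: "1 \<le> i" "i \<le> N" "1 \<le> j" "j \<le> N"
    and w: "\<And>l. l \<in> grid_labels N \<Longrightarrow> base_cost N l < w l \<and> w l < base_cost N l + 1"
    and left: "\<And>r. r \<in> {1..N} \<Longrightarrow> P (r, 0) = (r \<le> i)"
    and top: "\<And>c. c \<in> {1..N} \<Longrightarrow> P (0, c) = (c \<le> j)"
    and bottom: "\<And>c. c \<in> {1..N} \<Longrightarrow> \<not> P (Suc N, c)"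
    and right: "\<And>r. r \<in> {1..N} \<Longrightarrow> \<not> P (r, Suc N)"
  shows "(\<Sum>l\<in>corner_cut i j. w l) \<le> (\<Sum>l\<in>{l\<in>grid_labels N. P (tail l) \<noteq> P (head l)}. w l)"
proof -
  define Cut where "Cut = {l\<in>grid_labels N. P (tail l) \<noteq> P (head l)}"
  define loss_c where "loss_c c = (if P (Suc i, c) then real N else 0)" for c
  define loss_r where "loss_r r = (if P (r, Suc j) then real N else 0)" for r
  obtain \<rho> where \<rho>: "\<And>c. c \<in> {1..j} \<Longrightarrow> \<rho> c \<le> N \<and> P (\<rho> c, c) \<noteq> P (Suc (\<rho> c), c) \<and>
      w (True, i, c) \<le> w (True, \<rho> c, c) + loss_c c"
    using vertical_crossings[OF ij(1,2,4) w top bottom] unfolding loss_c_def by blast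
  obtain \<sigma> where \<sigma>: "\<And>r. r \<in> {1..i} \<Longrightarrow> \<sigma> r \<le> N \<and> P (r, \<sigma> r) \<noteq> P (r, Suc (\<sigma> r)) \<and>
      w (False, r, j) \<le> w (False, r, \<sigma> r) + loss_r r"
    using horizontal_crossings[OF ij(2,3,4) w left right] unfolding loss_r_def by blast
  obtain X where X: "X \<subseteq> Cut" "\<And>l. l \<in> X \<Longrightarrow> \<exists>s. l \<in> {(False, Suc i, s), (True, s, Suc j)}"
      "(\<Sum>c\<in>{1..j}. loss_c c) + (\<Sum>r\<in>{1..i}. loss_r r) \<le> (\<Sum>l\<in>X. w l)"
    using leak_compensated[OF ij w left top bottom right] unfolding Cut_def loss_c_def loss_r_def by blast
  define A where "A = (\<lambda>c. (True, \<rho> c, c)) ` {1..j}"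
  define B where "B = (\<lambda>r. (False, r, \<sigma> r)) ` {1..i}"
  have AB: "A \<subseteq> Cut" "B \<subseteq> Cut" "A \<inter> B = {}" "X \<inter> (A \<union> B) = {}"
    unfolding A_def B_def Cut_def grid_labels_def using \<rho> \<sigma> ij X(2) by force+
  have fin: "finite Cut" unfolding Cut_def using finite_grid_labels by simp
  have "(\<Sum>l\<in>corner_cut i j. w l) = (\<Sum>c\<in>{1..j}. w (True, i, c)) + (\<Sum>r\<in>{1..i}. w (False, r, j))"
    by (rule sum_corner_cut)
  also have "\<dots> \<le> (\<Sum>c\<in>{1..j}. w (True, \<rho> c, c) + loss_c c) + (\<Sum>r\<in>{1..i}. w (False, r, \<sigma> r) + loss_r r)"
    using \<rho> \<sigma> by (intro add_mono sum_mono) auto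
  also have "\<dots> = (\<Sum>l\<in>A. w l) + (\<Sum>l\<in>B. w l) + ((\<Sum>c\<in>{1..j}. loss_c c) + (\<Sum>r\<in>{1..i}. loss_r r))"
    unfolding A_def B_def by (simp add: sum.distrib sum.reindex inj_on_def)
  also have "\<dots> \<le> (\<Sum>l\<in>A \<union> B \<union> X. w l)"
    using AB X(1,3) finite_subset[OF _ fin] by (simp add: sum.union_disjoint Int_Un_distrib2 inf_commute)
  also have "\<dots> \<le> (\<Sum>l\<in>Cut. w l)"
  proof (rule sum_mono2[OF fin])
    show "A \<union> B \<union> X \<subseteq> Cut" using AB X(1) by blast
    show "0 \<le> w l" if "l \<in> Cut - (A \<union> B \<union> X)" for l
    proof -
      have "l \<in> grid_labels N" using that unfolding Cut_def by blast
      then show ?thesis using base_cost_ge[of l N] w[of l] by (smt (verit) zero_le_power2)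
    qed
  qed
  finally show ?thesis unfolding Cut_def .
qed

(* The grid network.  Points of the plane lattice are encoded as natural numbers by
   prod_encode.  Terminals: N on each side and rho isolated extra ones. *)
definition inner_points :: "nat \<Rightarrow> (nat \<times> nat) set" where
  "inner_points N = {1..N} \<times> {1..N}"

definition terminal_points :: "nat \<Rightarrow> nat \<Rightarrow> (nat \<times> nat) set" where
  "terminal_points N \<rho> = (\<lambda>r. (r, 0)) ` {1..N} \<union> (\<lambda>c. (0, c)) ` {1..N}
     \<union> (\<lambda>c. (Suc N, c)) ` {1..N} \<union> (\<lambda>r. (r, Suc N)) ` {1..N} \<union> (\<lambda>t. (N + 2 + t, 0)) ` {..<\<rho>}"

definition corner_terminals :: "nat \<Rightarrow> nat \<Rightarrow> (nat \<times> nat) set" where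
  "corner_terminals i j = (\<lambda>r. (r, 0)) ` {1..i} \<union> (\<lambda>c. (0, c)) ` {1..j}"

definition label_edge :: "bool \<times> nat \<times> nat \<Rightarrow> nat set" where
  "label_edge l = {prod_encode (tail l), prod_encode (head l)}"

definition edge_cost :: "(bool \<times> nat \<times> nat \<Rightarrow> real) \<Rightarrow> nat set \<Rightarrow> real" where
  "edge_cost w e = w (inv label_edge e)"

definition grid_vertices :: "nat \<Rightarrow> nat \<Rightarrow> nat set" where
  "grid_vertices N \<rho> = prod_encode ` (inner_points N \<union> terminal_points N \<rho>)"

definition grid_edges :: "nat \<Rightarrow> nat set set" where
  "grid_edges N = label_edge ` grid_labels N"

definition grid_terminals :: "nat \<Rightarrow> nat \<Rightarrow> nat set" where
  "grid_terminals N \<rho> = prod_encode ` terminal_points N \<rho>"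

(* Distinct labels give distinct edges (the head has the larger coordinate sum), so
   edge_cost really transports label costs to edges. *)
lemma tail_ne_head: "tail l \<noteq> head l"
  by (cases l rule: head.cases) auto

lemma coordinate_sum_head: "fst (head l) + snd (head l) = Suc (fst (tail l) + snd (tail l))"
  by (cases l rule: head.cases) auto

lemma label_edge_inj: "inj label_edge"
proof (rule injI)
  fix l l' assume "label_edge l = label_edge l'"
  then have "tail l = tail l' \<and> head l = head l' \<or> tail l = head l' \<and> head l = tail l'"
    unfolding label_edge_def by (auto simp: doubleton_eq_iff)
  moreover have "\<not> (tail l = head l' \<and> head l = tail l')"
    using coordinate_sum_head[of l] coordinate_sum_head[of l'] by auto
  ultimately have same: "tail l = tail l'" "head l = head l'" by auto
  obtain d r c d' r' c' where "l = (d, r, c)" "l' = (d', r', c')" by (cases l, cases l') auto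
  with same show "l = l'" by (cases d; cases d') auto
qed

lemma edge_cost_label_edge [simp]: "edge_cost w (label_edge l) = w l"
  by (simp add: edge_cost_def inv_f_f[OF label_edge_inj])

lemma card_terminal_points: "card (terminal_points N \<rho>) = 4 * N + \<rho>"
proof -
  define L T B R X where "L = (\<lambda>r. (r, 0::nat)) ` {1..N}" and "T = (\<lambda>c. (0::nat, c)) ` {1..N}"
    and "B = (\<lambda>c. (Suc N, c)) ` {1..N}" and "R = (\<lambda>r. (r, Suc N)) ` {1..N}"
    and "X = (\<lambda>t. (N + 2 + t, 0::nat)) ` {..<\<rho>}"
  have sizes: "card L = N" "card T = N" "card B = N" "card R = N" "card X = \<rho>"
    unfolding L_def T_def B_def R_def X_def by (simp_all add: card_image inj_on_def)
  have "L \<inter> T = {}" "(L \<union> T) \<inter> B = {}" "(L \<union> T \<union> B) \<inter> R = {}" "(L \<union> T \<union> B \<union> R) \<inter> X = {}"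
    unfolding L_def T_def B_def R_def X_def by auto
  then have "card (L \<union> T \<union> B \<union> R \<union> X) = card L + card T + card B + card R + card X"
    unfolding L_def T_def B_def R_def X_def by (simp add: card_Un_disjoint)
  then show ?thesis
    unfolding terminal_points_def L_def T_def B_def R_def X_def sizes[unfolded L_def T_def B_def R_def X_def]
    by simp
qed

lemma finite_grid_points: "finite (inner_points N \<union> terminal_points N \<rho>)"
proof -
  have "inner_points N \<union> terminal_points N \<rho> \<subseteq> {..N + 2 + \<rho>} \<times> {..N + 1}"
    unfolding inner_points_def terminal_points_def by auto
  then show ?thesis by (rule finite_subset) auto
qed

lemma endpoints_in_grid:
  assumes "l \<in> grid_labels N"
  shows "tail l \<in> inner_points N \<union> terminal_points N \<rho>" "head l \<in> inner_points N \<union> terminal_points N \<rho>"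
proof -
  obtain d r c where l: "l = (d, r, c)" by (cases l) auto
  show "tail l \<in> inner_points N \<union> terminal_points N \<rho>"
    using assms l by (cases d; cases "r = 0"; cases "c = 0")
      (auto simp: grid_labels_def inner_points_def terminal_points_def)
  show "head l \<in> inner_points N \<union> terminal_points N \<rho>"
    using assms l by (cases d; cases "r = N"; cases "c = N"; cases "r = 0"; cases "c = 0")
      (auto simp: grid_labels_def inner_points_def terminal_points_def)
qed

lemma grid_graph: "graph (grid_vertices N \<rho>) (grid_edges N)"
  unfolding graph_def
proof (intro conjI ballI)
  show "finite (grid_vertices N \<rho>)" unfolding grid_vertices_def using finite_grid_points by simp
  fix e assume "e \<in> grid_edges N"
  then obtain l where l: "l \<in> grid_labels N" "e = label_edge l" unfolding grid_edges_def by blast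
  show "e \<subseteq> grid_vertices N \<rho>"
    using endpoints_in_grid[OF l(1)] l(2) by (auto simp: label_edge_def grid_vertices_def)
  show "card e = 2" using l(2) tail_ne_head[of l] by (simp add: label_edge_def)
qed

lemma grid_network:
  assumes "\<And>l. l \<in> grid_labels N \<Longrightarrow> base_cost N l < w l"
  shows "network (grid_vertices N \<rho>) (grid_edges N) (edge_cost w)"
  unfolding network_def
proof (intro conjI grid_graph ballI)
  fix e assume "e \<in> grid_edges N"
  then obtain l where l: "l \<in> grid_labels N" "e = label_edge l" unfolding grid_edges_def by blast
  have "0 \<le> base_cost N l" using base_cost_ge[OF l(1)] by (smt (verit) zero_le_power2)
  then show "0 < edge_cost w e" using assms[OF l(1)] l(2) by simp
qed

lemma cut_cost_grid:
  "cut_cost (grid_edges N) (edge_cost w) W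
     = (\<Sum>l\<in>{l\<in>grid_labels N. (prod_encode (tail l) \<in> W) \<noteq> (prod_encode (head l) \<in> W)}. w l)"
proof -
  have "card (label_edge l \<inter> W) = 1 \<longleftrightarrow> (prod_encode (tail l) \<in> W) \<noteq> (prod_encode (head l) \<in> W)" for l
    using tail_ne_head[of l] by (cases "prod_encode (tail l) \<in> W"; cases "prod_encode (head l) \<in> W")
      (auto simp: label_edge_def)
  then have "{e\<in>grid_edges N. card (e \<inter> W) = 1}
      = label_edge ` {l\<in>grid_labels N. (prod_encode (tail l) \<in> W) \<noteq> (prod_encode (head l) \<in> W)}"
    unfolding grid_edges_def by auto
  then show ?thesis
    unfolding cut_cost_def by (simp add: sum.reindex inj_on_subset[OF label_edge_inj])
qed

(* Every S(i,j)-separating cut costs at least the corner cut: colour a point by whether it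
   lies on the side of the cut containing S(i,j), and apply corner_cut_minimal. *)
lemma corner_cut_lower_bound:
  assumes ij: "1 \<le> i" "i \<le> N" "1 \<le> j" "j \<le> N"
    and w: "\<And>l. l \<in> grid_labels N \<Longrightarrow> base_cost N l < w l \<and> w l < base_cost N l + 1"
    and sep: "separating (grid_vertices N \<rho>) (grid_terminals N \<rho>)
                (prod_encode ` corner_terminals i j) W"
  shows "(\<Sum>l\<in>corner_cut i j. w l) \<le> cut_cost (grid_edges N) (edge_cost w) W"
proof -
  define P where "P p = ((prod_encode p \<in> W) = (W \<inter> grid_terminals N \<rho> = prod_encode ` corner_terminals i j))"
    for p
  have terminal: "P p = (p \<in> corner_terminals i j)" if p: "p \<in> terminal_points N \<rho>" for p
  proof (cases "W \<inter> grid_terminals N \<rho> = prod_encode ` corner_terminals i j")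
    case True
    then have "(prod_encode p \<in> W) = (prod_encode p \<in> prod_encode ` corner_terminals i j)"
      using p unfolding grid_terminals_def by blast
    then show ?thesis using True unfolding P_def by auto
  next
    case False
    with sep have "W \<inter> grid_terminals N \<rho> = grid_terminals N \<rho> - prod_encode ` corner_terminals i j"
      unfolding separating_def by blast
    then have "(prod_encode p \<in> W) = (prod_encode p \<notin> prod_encode ` corner_terminals i j)"
      using p unfolding grid_terminals_def by blast
    then show ?thesis using False unfolding P_def by auto
  qed
  have "(\<Sum>l\<in>corner_cut i j. w l) \<le> (\<Sum>l\<in>{l\<in>grid_labels N. P (tail l) \<noteq> P (head l)}. w l)"
  proof (rule corner_cut_minimal[OF ij w])
    show "P (r, 0) = (r \<le> i)" if "r \<in> {1..N}" for r
      using terminal[of "(r, 0)"] that unfolding terminal_points_def corner_terminals_def by auto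
    show "P (0, c) = (c \<le> j)" if "c \<in> {1..N}" for c
      using terminal[of "(0, c)"] that unfolding terminal_points_def corner_terminals_def by auto
    show "\<not> P (Suc N, c)" if "c \<in> {1..N}" for c
      using terminal[of "(Suc N, c)"] that ij unfolding terminal_points_def corner_terminals_def by auto
    show "\<not> P (r, Suc N)" if "r \<in> {1..N}" for r
      using terminal[of "(r, Suc N)"] that ij unfolding terminal_points_def corner_terminals_def by auto
  qed
  moreover have "(P (tail l) \<noteq> P (head l)) = ((prod_encode (tail l) \<in> W) \<noteq> (prod_encode (head l) \<in> W))" for l
    unfolding P_def by auto
  ultimately show ?thesis by (simp add: cut_cost_grid)
qed

lemma corner_cut_realized:
  fixes N \<rho> i j :: nat and w :: "bool \<times> nat \<times> nat \<Rightarrow> real"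
  assumes ij: "1 \<le> i" "i \<le> N" "1 \<le> j" "j \<le> N"
  defines "W \<equiv> prod_encode ` {p \<in> inner_points N \<union> terminal_points N \<rho>. fst p \<le> i \<and> snd p \<le> j}"
  shows "separating (grid_vertices N \<rho>) (grid_terminals N \<rho>) (prod_encode ` corner_terminals i j) W"
    and "cut_cost (grid_edges N) (edge_cost w) W = (\<Sum>l\<in>corner_cut i j. w l)"
proof -
  have "{p \<in> inner_points N \<union> terminal_points N \<rho>. fst p \<le> i \<and> snd p \<le> j} \<inter> terminal_points N \<rho>
      = corner_terminals i j"
    using ij unfolding corner_terminals_def terminal_points_def by auto
  then have "W \<inter> grid_terminals N \<rho> = prod_encode ` corner_terminals i j"
    unfolding W_def grid_terminals_def by (simp add: image_Int[symmetric] inj_on_def)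
  then show "separating (grid_vertices N \<rho>) (grid_terminals N \<rho>) (prod_encode ` corner_terminals i j) W"
    unfolding separating_def W_def grid_vertices_def by auto
  have inside: "(prod_encode p \<in> W) = (fst p \<le> i \<and> snd p \<le> j)"
    if "p \<in> inner_points N \<union> terminal_points N \<rho>" for p
    unfolding W_def using that by auto
  have "{l\<in>grid_labels N. (prod_encode (tail l) \<in> W) \<noteq> (prod_encode (head l) \<in> W)}
      = {l\<in>grid_labels N. (fst (tail l) \<le> i \<and> snd (tail l) \<le> j) \<noteq> (fst (head l) \<le> i \<and> snd (head l) \<le> j)}"
    using inside endpoints_in_grid by blast
  also have "\<dots> = corner_cut i j"
  proof (intro set_eqI iffI)
    fix l
    assume "l \<in> {l\<in>grid_labels N. (fst (tail l) \<le> i \<and> snd (tail l) \<le> j) \<noteq> (fst (head l) \<le> i \<and> snd (head l) \<le> j)}"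
    then show "l \<in> corner_cut i j"
      by (cases l rule: head.cases) (auto simp: grid_labels_def corner_cut_def)
  next
    fix l assume "l \<in> corner_cut i j"
    then show "l \<in> {l\<in>grid_labels N. (fst (tail l) \<le> i \<and> snd (tail l) \<le> j) \<noteq> (fst (head l) \<le> i \<and> snd (head l) \<le> j)}"
      using ij by (auto simp: grid_labels_def corner_cut_def)
  qed
  finally show "cut_cost (grid_edges N) (edge_cost w) W = (\<Sum>l\<in>corner_cut i j. w l)"
    by (simp add: cut_cost_grid)
qed

lemma grid_mincut:
  assumes ij: "1 \<le> i" "i \<le> N" "1 \<le> j" "j \<le> N"
    and w: "\<And>l. l \<in> grid_labels N \<Longrightarrow> base_cost N l < w l \<and> w l < base_cost N l + 1"
  shows "mincut (grid_vertices N \<rho>) (grid_edges N) (edge_cost w) (grid_terminals N \<rho>)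
           (prod_encode ` corner_terminals i j) = (\<Sum>l\<in>corner_cut i j. w l)"
  unfolding mincut_def
proof (rule Min_eqI)
  let ?costs = "{cut_cost (grid_edges N) (edge_cost w) W | W. separating (grid_vertices N \<rho>)
                   (grid_terminals N \<rho>) (prod_encode ` corner_terminals i j) W}"
  have "?costs \<subseteq> cut_cost (grid_edges N) (edge_cost w) ` Pow (grid_vertices N \<rho>)"
    unfolding separating_def by auto
  moreover have "finite (grid_vertices N \<rho>)" unfolding grid_vertices_def using finite_grid_points by simp
  ultimately show "finite ?costs" by (meson finite_Pow_iff finite_imageI finite_subset)
  show "\<And>y. y \<in> ?costs \<Longrightarrow> (\<Sum>l\<in>corner_cut i j. w l) \<le> y"
    using corner_cut_lower_bound[OF ij w] by blast
  show "(\<Sum>l\<in>corner_cut i j. w l) \<in> ?costs"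
    using corner_cut_realized(1)[OF ij, where \<rho> = \<rho>]
      corner_cut_realized(2)[OF ij, where \<rho> = \<rho> and w = w]
    by (metis (mono_tags, lifting) mem_Collect_eq)
qed

definition point :: "nat \<times> nat \<Rightarrow> real^2" where
  "point p = vector [real (fst p), real (snd p)]"

lemma point_components [simp]: "point p $ 1 = real (fst p)" "point p $ 2 = real (snd p)"
  by (simp_all add: point_def)

lemma point_eq_iff [simp]: "point p = point q \<longleftrightarrow> p = q"
  by (metis point_components prod_eq_iff of_nat_eq_iff)

lemma point_eqI: "z $ 1 = real a \<Longrightarrow> z $ 2 = real b \<Longrightarrow> z = point (a, b)"
  by (simp add: vec_eq_iff forall_2)

lemma segment_coordinates:
  assumes "z \<in> closed_segment (point (tail l)) (point (head l))"
  shows "l = (True, r, c) \<Longrightarrow> z $ 2 = real c \<and> real r \<le> z $ 1 \<and> z $ 1 \<le> real r + 1"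
    and "l = (False, r, c) \<Longrightarrow> z $ 1 = real r \<and> real c \<le> z $ 2 \<and> z $ 2 \<le> real c + 1"
proof -
  obtain u where u: "0 \<le> u" "u \<le> 1" "z = (1 - u) *\<^sub>R point (tail l) + u *\<^sub>R point (head l)"
    using assms by (auto simp: in_segment)
  then have "z $ 1 = (1 - u) * point (tail l) $ 1 + u * point (head l) $ 1"
    "z $ 2 = (1 - u) * point (tail l) $ 2 + u * point (head l) $ 2" by simp_all
  then show "l = (True, r, c) \<Longrightarrow> z $ 2 = real c \<and> real r \<le> z $ 1 \<and> z $ 1 \<le> real r + 1"
    and "l = (False, r, c) \<Longrightarrow> z $ 1 = real r \<and> real c \<le> z $ 2 \<and> z $ 2 \<le> real c + 1"
    using u(1,2) by (simp_all add: algebra_simps)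
qed

lemma lattice_point_on_segment:
  assumes "point q \<in> closed_segment (point (tail l)) (point (head l))"
  shows "q = tail l \<or> q = head l"
proof -
  obtain d r c where l: "l = (d, r, c)" by (cases l) auto
  show ?thesis
  proof (cases d)
    case True
    then have "snd q = c" "real r \<le> real (fst q)" "real (fst q) \<le> real r + 1"
      using segment_coordinates(1)[OF assms] l by auto
    then show ?thesis using True l by (cases q) auto
  next
    case False
    then have "fst q = r" "real c \<le> real (snd q)" "real (snd q) \<le> real c + 1"
      using segment_coordinates(2)[OF assms] l by auto
    then show ?thesis using False l by (cases q) auto
  qed
qed

lemma segments_meet_in_lattice_point:
  assumes "l \<noteq> l'" "z \<in> closed_segment (point (tail l)) (point (head l))"
    "z \<in> closed_segment (point (tail l')) (point (head l'))"
  shows "\<exists>q. z = point q"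
proof -
  obtain d r c d' r' c' where l: "l = (d, r, c)" "l' = (d', r', c')" by (cases l, cases l') auto
  note on_l = segment_coordinates[OF assms(2)] and on_l' = segment_coordinates[OF assms(3)]
  show ?thesis
  proof (cases d; cases d')
    assume "d" "d'"
    then have "z $ 2 = real c" "c' = c" "real r \<le> z $ 1" "z $ 1 \<le> real r + 1"
      "real r' \<le> z $ 1" "z $ 1 \<le> real r' + 1" using on_l on_l' l by auto
    moreover have "r \<noteq> r'" using assms(1) l \<open>d\<close> \<open>d'\<close> \<open>c' = c\<close> by auto
    ultimately have "z $ 1 = real (max r r')" "z $ 2 = real c" by (auto simp: max_def)
    then show ?thesis by (blast intro: point_eqI)
  next
    assume "d" "\<not> d'"
    then have "z $ 1 = real r'" "z $ 2 = real c" using on_l on_l' l by auto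
    then show ?thesis by (blast intro: point_eqI)
  next
    assume "\<not> d" "d'"
    then have "z $ 1 = real r" "z $ 2 = real c'" using on_l on_l' l by auto
    then show ?thesis by (blast intro: point_eqI)
  next
    assume "\<not> d" "\<not> d'"
    then have "z $ 1 = real r" "r' = r" "real c \<le> z $ 2" "z $ 2 \<le> real c + 1"
      "real c' \<le> z $ 2" "z $ 2 \<le> real c' + 1" using on_l on_l' l by auto
    moreover have "c \<noteq> c'" using assms(1) l \<open>\<not> d\<close> \<open>\<not> d'\<close> \<open>r' = r\<close> by auto
    ultimately have "z $ 1 = real r" "z $ 2 = real (max c c')" by (auto simp: max_def)
    then show ?thesis by (blast intro: point_eqI)
  qed
qed

lemma grid_planar: "planar (grid_vertices N \<rho>) (grid_edges N)"
proof (rule planar_straight_line[where f = "point \<circ> prod_decode"])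
  let ?f = "point \<circ> prod_decode"
  have hull: "convex hull (?f ` label_edge l) = closed_segment (point (tail l)) (point (head l))" for l
    by (simp add: label_edge_def segment_convex_hull)
  have vertex_image: "?f ` grid_vertices N \<rho> = point ` (inner_points N \<union> terminal_points N \<rho>)"
    unfolding grid_vertices_def by (simp add: image_image)
  show "inj_on ?f (grid_vertices N \<rho>)"
    unfolding grid_vertices_def by (auto simp: inj_on_def)
  show "e \<subseteq> grid_vertices N \<rho> \<and> card e = 2" if "e \<in> grid_edges N" for e
    using grid_graph that unfolding graph_def by blast
  show "convex hull (?f ` e) \<inter> ?f ` grid_vertices N \<rho> = ?f ` e" if e: "e \<in> grid_edges N" for e
  proof -
    obtain l where l: "l \<in> grid_labels N" "e = label_edge l" using e unfolding grid_edges_def by blast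
    have "closed_segment (point (tail l)) (point (head l)) \<inter> point ` (inner_points N \<union> terminal_points N \<rho>)
        = {point (tail l), point (head l)}"
    proof
      show "closed_segment (point (tail l)) (point (head l)) \<inter> point ` (inner_points N \<union> terminal_points N \<rho>)
          \<subseteq> {point (tail l), point (head l)}"
        using lattice_point_on_segment by blast
      show "{point (tail l), point (head l)}
          \<subseteq> closed_segment (point (tail l)) (point (head l)) \<inter> point ` (inner_points N \<union> terminal_points N \<rho>)"
        using endpoints_in_grid[OF l(1), of \<rho>] by auto
    qed
    then show ?thesis unfolding l(2) hull vertex_image by (simp add: label_edge_def)
  qed
  show "convex hull (?f ` e) \<inter> convex hull (?f ` e') \<subseteq> ?f ` (e \<inter> e')"
    if edges: "e \<in> grid_edges N" "e' \<in> grid_edges N" "e \<noteq> e'" for e e'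
  proof
    fix z assume z: "z \<in> convex hull (?f ` e) \<inter> convex hull (?f ` e')"
    obtain l l' where l: "e = label_edge l" "e' = label_edge l'"
      using edges(1,2) unfolding grid_edges_def by blast
    then have "l \<noteq> l'" using edges(3) by blast
    moreover have on: "z \<in> closed_segment (point (tail l)) (point (head l))"
      "z \<in> closed_segment (point (tail l')) (point (head l'))" using z unfolding l hull by auto
    ultimately obtain q where q: "z = point q" using segments_meet_in_lattice_point by blast
    then have "q \<in> {tail l, head l}" "q \<in> {tail l', head l'}"
      using on lattice_point_on_segment by blast+
    then have "prod_encode q \<in> e \<inter> e'" unfolding l label_edge_def by auto
    then show "z \<in> ?f ` (e \<inter> e')" using q by (metis comp_apply image_eqI prod_encode_inverse)
  qed
qed

(* The N^2 corner-cut values are Q-independent: ordered by column, the corner cut of (i,j)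
   uses the edge (True, i, j), which no corner cut of a different block with column <= j uses. *)
lemma corner_sums_independent:
  assumes inj: "inj_on w (grid_labels N)" and indep: "ratvec.independent (w ` grid_labels N)"
  defines "m \<equiv> \<lambda>t. \<Sum>l\<in>corner_cut (fst t) (snd t). w l"
  shows "ratvec.independent (m ` ({1..N} \<times> {1..N})) \<and> inj_on m ({1..N} \<times> {1..N})"
proof (rule independent_triangular[where rk = snd])
  fix t assume t: "t \<in> {1..N} \<times> {1..N}"
  then obtain i j where tij: "t = (i, j)" "i \<in> {1..N}" "j \<in> {1..N}" by blast
  have "(\<Sum>l\<in>corner_cut i j. w l)
      \<notin> ratvec.span ((\<lambda>s. \<Sum>l\<in>corner_cut (fst s) (snd s). w l) ` {s \<in> {1..N} \<times> {1..N} - {t}. snd s \<le> snd t})"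
  proof (rule sum_notin_span_of_avoiding[OF finite_grid_labels inj indep])
    show "(True, i, j) \<in> corner_cut i j" using tij unfolding corner_cut_def by auto
    show "corner_cut i j \<subseteq> grid_labels N" using tij corner_cut_subset by auto
    fix s assume s: "s \<in> {s \<in> {1..N} \<times> {1..N} - {t}. snd s \<le> snd t}"
    then have "(True, i, j) \<notin> corner_cut (fst s) (snd s)"
      using tij unfolding corner_cut_def by (cases s) auto
    moreover have "corner_cut (fst s) (snd s) \<subseteq> grid_labels N"
      using s by (intro corner_cut_subset) auto
    ultimately show "corner_cut (fst s) (snd s) \<subseteq> grid_labels N - {(True, i, j)}" by blast
  qed
  then show "m t \<notin> ratvec.span (m ` {s \<in> {1..N} \<times> {1..N} - {t}. snd s \<le> snd t})"
    unfolding m_def tij by simp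
qed simp

lemma grid_mimicking_lower_bound:
  assumes N: "1 \<le> N"
    and w: "\<And>l. l \<in> grid_labels N \<Longrightarrow> base_cost N l < w l \<and> w l < base_cost N l + 1"
    and inj: "inj_on w (grid_labels N)" and indep: "ratvec.independent (w ` grid_labels N)"
    and mim: "mimicking (grid_vertices N \<rho>) (grid_edges N) (edge_cost w) (grid_terminals N \<rho>) V' E' c'"
  shows "N ^ 2 \<le> card E'"
proof -
  define m where "m t = (\<Sum>l\<in>corner_cut (fst t) (snd t). w l)" for t
  have "card ({1..N} \<times> {1..N}) \<le> card E'"
  proof (rule mimicking_edge_lower_bound[OF mim])
    show "ratvec.independent (m ` ({1..N} \<times> {1..N}))" "inj_on m ({1..N} \<times> {1..N})"
      using corner_sums_independent[OF inj indep] unfolding m_def by auto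
    fix t assume "t \<in> {1..N} \<times> {1..N}"
    then obtain i j where t: "t = (i, j)" and ij: "1 \<le> i" "i \<le> N" "1 \<le> j" "j \<le> N" by auto
    let ?S = "prod_encode ` corner_terminals i j"
    have "?S \<subseteq> grid_terminals N \<rho>" "?S \<noteq> {}"
      using ij unfolding grid_terminals_def corner_terminals_def terminal_points_def by auto
    moreover have "prod_encode (Suc N, 1) \<in> grid_terminals N \<rho> - ?S"
      using N unfolding grid_terminals_def corner_terminals_def terminal_points_def by auto
    moreover have "m t = mincut (grid_vertices N \<rho>) (grid_edges N) (edge_cost w) (grid_terminals N \<rho>) ?S"
      using grid_mincut[OF ij w] unfolding m_def t by simp
    ultimately show "\<exists>S. S \<subseteq> grid_terminals N \<rho> \<and> S \<noteq> {} \<and> S \<noteq> grid_terminals N \<rho> \<and>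
        m t = mincut (grid_vertices N \<rho>) (grid_edges N) (edge_cost w) (grid_terminals N \<rho>) S"
      by blast
  qed simp
  then show ?thesis by (simp add: power2_eq_square)
qed

lemma planar_network_with_large_mimicking_networks:
  assumes "1 \<le> N"
  shows "\<exists>V E c Q. network V E c \<and> planar V E \<and> Q \<subseteq> V \<and> card Q = 4 * N + \<rho> \<and>
           (\<forall>V' E' c'. mimicking V E c Q V' E' c' \<longrightarrow> N ^ 2 \<le> card E')"
proof -
  obtain w where w: "\<forall>l\<in>grid_labels N. base_cost N l < w l \<and> w l < base_cost N l + 1"
      "inj_on w (grid_labels N)" "ratvec.independent (w ` grid_labels N)"
    using independent_perturbation_exists[OF finite_grid_labels zero_less_one, where lo = "base_cost N"]
    by auto
  have "card (grid_terminals N \<rho>) = 4 * N + \<rho>"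
    unfolding grid_terminals_def using card_terminal_points by (simp add: card_image inj_on_def)
  moreover have "grid_terminals N \<rho> \<subseteq> grid_vertices N \<rho>"
    unfolding grid_terminals_def grid_vertices_def by auto
  ultimately show ?thesis
    using grid_network[of N w \<rho>] grid_planar[of N \<rho>] grid_mimicking_lower_bound[OF assms _ w(2,3)] w(1)
    by (intro exI[of _ "grid_vertices N \<rho>"] exI[of _ "grid_edges N"] exI[of _ "edge_cost w"]
        exI[of _ "grid_terminals N \<rho>"]) auto
qed

theorem theorem1p3:
  shows "\<exists>\<beta>::real. \<beta> > 0 \<and>
    (\<forall>k::nat. k > 5 \<longrightarrow>
      (\<exists>V E c Q. network V E c \<and> planar V E \<and> Q \<subseteq> V \<and> card Q = k \<and>
         (\<forall>V' E' c'. mimicking V E c Q V' E' c' \<longrightarrow> real (card E') \<ge> \<beta> * real k ^ 2)))"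
proof (intro exI[of _ "1/64"] conjI allI impI)
  fix k :: nat assume "k > 5"
  define N where "N = k div 4"
  have N: "1 \<le> N" "k = 4 * N + k mod 4" using \<open>k > 5\<close> unfolding N_def by auto
  then have "real k ^ 2 \<le> (8 * real N) ^ 2" by (intro power_mono) auto
  then have bound: "1/64 * real k ^ 2 \<le> real (N ^ 2)" by (simp add: power_mult_distrib)
  obtain V E c Q where "network V E c" "planar V E" "Q \<subseteq> V" "card Q = k"
      and large: "\<And>V' E' c'. mimicking V E c Q V' E' c' \<Longrightarrow> N ^ 2 \<le> card E'"
    using planar_network_with_large_mimicking_networks[OF N(1), of "k mod 4"] N(2) by metis
  moreover have "1/64 * real k ^ 2 \<le> real (card E')" if "mimicking V E c Q V' E' c'" for V' E' c'
    using bound large[OF that] by (meson of_nat_le_iff order_trans)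
  ultimately show "\<exists>V E c Q. network V E c \<and> planar V E \<and> Q \<subseteq> V \<and> card Q = k \<and>
      (\<forall>V' E' c'. mimicking V E c Q V' E' c' \<longrightarrow> real (card E') \<ge> 1/64 * real k ^ 2)"
    by blast
qed simp

end
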